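(* Let $\mathbf{P}$ be a $g$-regular $(K,F,Z,S)$ PDA with $g=KZ/F+1\ge 2$. Then $F\ge\binom{K}{KZ/F}$.
   Context: For positive integers $K,F,Z,S$ and an integer $g$, an $F\times K$ array $\mathbf{P}=[p_{j,k}]$ whose entries are either a special symbol $*$ or one of the integers $0,1,\dots,S-1$ is a $g$-regular $(K,F,Z,S)$ PDA if: (C1) the symbol $*$ appears exactly $Z$ times in each column; (C2') each integer in $\{0,\dots,S-1\}$ appears exactly $g$ times in $\mathbf{P}$; (C3) for any two distinct entries with $p_{j_1,k_1}=p_{j_2,k_2}=s$ an integer, we have $j_1\neq j_2$, $k_1\neq k_2$, and $p_{j_1,k_2}=p_{j_2,k_1}=*$. *)

theory Defs
  imports Complex_Main
begin

text \<open>An F x K array is a function P :: nat => nat => nat option, where P j k is the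
entry in row j < F and column k < K; None encodes the special symbol *, and
Some s encodes the integer s.\<close>

definition g_regular_PDA ::
  "nat \<Rightarrow> nat \<Rightarrow> nat \<Rightarrow> nat \<Rightarrow> int \<Rightarrow> (nat \<Rightarrow> nat \<Rightarrow> nat option) \<Rightarrow> bool" where
  "g_regular_PDA K F Z S g P \<longleftrightarrow>
     K > 0 \<and> F > 0 \<and> Z > 0 \<and> S > 0 \<and>
     (\<forall>j<F. \<forall>k<K. \<forall>s. P j k = Some s \<longrightarrow> s < S) \<and>
     (\<forall>k<K. card {j. j < F \<and> P j k = None} = Z) \<and>
     (\<forall>s<S. int (card {(j, k). j < F \<and> k < K \<and> P j k = Some s}) = g) \<and>
     (\<forall>j1 k1 j2 k2 s. j1 < F \<and> k1 < K \<and> j2 < F \<and> k2 < K \<and>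
        (j1, k1) \<noteq> (j2, k2) \<and> P j1 k1 = Some s \<and> P j2 k2 = Some s \<longrightarrow>
        j1 \<noteq> j2 \<and> k1 \<noteq> k2 \<and> P j1 k2 = None \<and> P j2 k1 = None)"

end

theory Submission
  imports Defs
begin

text \<open>Write \<open>t = g - 1 = KZ/F\<close> and let the star set of a row be the set of columns
in which it carries \<open>*\<close>. If row \<open>j\<close> carries the integer \<open>s\<close> in column \<open>k\<close>, then by (C3)
the \<open>g\<close> occurrences of \<open>s\<close> lie in distinct columns and row \<open>j\<close> has \<open>*\<close> in all of them
except \<open>k\<close>; so every row has at least \<open>t\<close> stars. Counting stars by columns gives exactly
\<open>KZ = tF\<close> of them, so every row has exactly \<open>t\<close> stars, and its star set is the column
set of any of its integers with that column removed. Applying this to the row holding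
\<open>s\<close> in another column \<open>k'\<close> shows that the star sets of the rows are closed under
exchanging one element, hence they include every \<open>t\<close>-subset of the \<open>K\<close> columns.\<close>

lemma exchange_closed_family_covers_subsets:
  fixes A :: "'i \<Rightarrow> 'a set"
  assumes "finite U" and "i0 \<in> I"
    and family: "\<And>i. i \<in> I \<Longrightarrow> A i \<subseteq> U \<and> card (A i) = t"
    and exchange: "\<And>i x y. i \<in> I \<Longrightarrow> x \<in> U - A i \<Longrightarrow> y \<in> A i \<Longrightarrow>
                      \<exists>i'\<in>I. A i' = insert x (A i - {y})"
    and "B \<subseteq> U" and "card B = t"
  shows "B \<in> A ` I"
proof -
  have finB: "finite B" using \<open>finite U\<close> \<open>B \<subseteq> U\<close> finite_subset by blast
  have "B \<in> A ` I" if "i \<in> I" and "card (B - A i) = n" for i n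
    using that
  proof (induction n arbitrary: i)
    case 0
    then have "B \<subseteq> A i" using finB by auto
    moreover have "finite (A i)" using family[OF 0(1)] \<open>finite U\<close> finite_subset by blast
    ultimately have "B = A i" using card_subset_eq family[OF 0(1)] \<open>card B = t\<close> by metis
    then show ?case using 0(1) by blast
  next
    case (Suc n)
    then obtain x where x: "x \<in> B" "x \<notin> A i"
      by (metis Diff_iff card.empty ex_in_conv nat.distinct(1))
    have "\<not> A i \<subseteq> B"
      using card_subset_eq[OF finB] family[OF Suc.prems(1)] \<open>card B = t\<close> x by metis
    then obtain y where y: "y \<in> A i" "y \<notin> B" by blast
    obtain i' where "i' \<in> I" and i': "A i' = insert x (A i - {y})"
      using exchange[OF Suc.prems(1) _ y(1)] x \<open>B \<subseteq> U\<close> by blast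
    have "B - A i' = (B - A i) - {x}" using i' y by auto
    then have "card (B - A i') = n" using Suc.prems(2) x finB by simp
    then show ?case using Suc.IH \<open>i' \<in> I\<close> by blast
  qed
  then show ?thesis using \<open>i0 \<in> I\<close> by blast
qed

lemma card_ge_choose_of_exchange_closed_family:
  fixes A :: "'i \<Rightarrow> 'a set"
  assumes "finite U" and "finite I" and "I \<noteq> {}"
    and "\<And>i. i \<in> I \<Longrightarrow> A i \<subseteq> U \<and> card (A i) = t"
    and "\<And>i x y. i \<in> I \<Longrightarrow> x \<in> U - A i \<Longrightarrow> y \<in> A i \<Longrightarrow>
           \<exists>i'\<in>I. A i' = insert x (A i - {y})"
  shows "card U choose t \<le> card I"
proof -
  have "{B. B \<subseteq> U \<and> card B = t} \<subseteq> A ` I"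
    using exchange_closed_family_covers_subsets[OF \<open>finite U\<close> _ assms(4,5)] assms(3) by blast
  then have "card {B. B \<subseteq> U \<and> card B = t} \<le> card (A ` I)"
    using \<open>finite I\<close> by (intro card_mono) auto
  also have "\<dots> \<le> card I" using \<open>finite I\<close> by (rule card_image_le)
  finally show ?thesis using n_subsets[OF \<open>finite U\<close>] by simp
qed

locale regular_pda =
  fixes K F Z S :: nat and g :: int and P :: "nat \<Rightarrow> nat \<Rightarrow> nat option"
  assumes regular: "g_regular_PDA K F Z S g P"
begin

definition stars :: "nat \<Rightarrow> nat set" where
  "stars j = {k. k < K \<and> P j k = None}"

definition occurrences :: "nat \<Rightarrow> (nat \<times> nat) set" where
  "occurrences s = {(j, k). j < F \<and> k < K \<and> P j k = Some s}"

lemma F_pos: "F > 0" and S_pos: "S > 0"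
  using regular unfolding g_regular_PDA_def by blast+

lemma entry_less_S: "j < F \<Longrightarrow> k < K \<Longrightarrow> P j k = Some s \<Longrightarrow> s < S"
  using regular unfolding g_regular_PDA_def by blast

lemma card_column_stars: "k < K \<Longrightarrow> card {j. j < F \<and> P j k = None} = Z"
  using regular unfolding g_regular_PDA_def by blast

lemma card_occurrences: "s < S \<Longrightarrow> int (card (occurrences s)) = g"
  using regular unfolding g_regular_PDA_def occurrences_def by blast

lemma equal_entries:
  assumes "(j1, k1) \<in> occurrences s" and "(j2, k2) \<in> occurrences s" and "(j1, k1) \<noteq> (j2, k2)"
  shows "j1 \<noteq> j2 \<and> k1 \<noteq> k2 \<and> P j1 k2 = None \<and> P j2 k1 = None"
  using regular assms(3) assms(1,2)[unfolded occurrences_def, simplified]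
  unfolding g_regular_PDA_def by blast

lemma stars_subset: "stars j \<subseteq> {..<K}"
  by (auto simp: stars_def)

lemma finite_stars: "finite (stars j)"
  using stars_subset finite_subset by blast

lemma finite_occurrences: "finite (occurrences s)"
  by (rule finite_subset[of _ "{..<F} \<times> {..<K}"]) (auto simp: occurrences_def)

lemma inj_on_snd_occurrences: "inj_on snd (occurrences s)"
  by (rule inj_onI) (metis equal_entries prod.collapse)

lemma card_occurrence_columns: "s < S \<Longrightarrow> int (card (snd ` occurrences s)) = g"
  using card_occurrences card_image[OF inj_on_snd_occurrences] by simp

lemma card_occurrence_columns_remove:
  assumes "(j, k) \<in> occurrences s"
  shows "int (card (snd ` occurrences s - {k})) = g - 1"
proof -
  have "s < S" using assms by (auto simp: occurrences_def intro: entry_less_S)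
  moreover have "k \<in> snd ` occurrences s" using assms by force
  then have "card (snd ` occurrences s) \<ge> 1"
    using finite_occurrences by (simp add: Suc_le_eq card_gt_0_iff, blast)
  ultimately show ?thesis
    using card_occurrence_columns finite_occurrences \<open>k \<in> _\<close> by (simp add: of_nat_diff)
qed

lemma occurrence_columns_subset_stars:
  assumes "(j, k) \<in> occurrences s"
  shows "snd ` occurrences s - {k} \<subseteq> stars j"
proof
  fix k' assume "k' \<in> snd ` occurrences s - {k}"
  then obtain j' where j': "(j', k') \<in> occurrences s" "k' \<noteq> k" by force
  then have "P j k' = None" using equal_entries[OF assms j'(1)] by auto
  then show "k' \<in> stars j" using j' by (simp add: stars_def occurrences_def)
qed

lemma g_le_K: "g \<le> int K"
proof -
  have "snd ` occurrences 0 \<subseteq> {..<K}" by (auto simp: occurrences_def)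
  then have "card (snd ` occurrences 0) \<le> K" by (metis card_lessThan card_mono finite_lessThan)
  then show ?thesis using card_occurrence_columns[OF S_pos] by linarith
qed

lemma card_stars_lower_bound:
  assumes "j < F"
  shows "g - 1 \<le> int (card (stars j))"
proof (cases "\<exists>k<K. P j k \<noteq> None")
  case True
  then obtain k s where "(j, k) \<in> occurrences s" using assms by (auto simp: occurrences_def)
  then show ?thesis
    using card_occurrence_columns_remove card_mono[OF finite_stars occurrence_columns_subset_stars]
    by fastforce
next
  case False
  then have "stars j = {..<K}" by (auto simp: stars_def)
  then show ?thesis using g_le_K by simp
qed

lemma sum_card_stars: "(\<Sum>j<F. card (stars j)) = K * Z"
proof -
  have "(\<Sum>j<F. card (stars j)) = card (SIGMA j:{..<F}. stars j)"
    by (simp add: finite_stars)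
  also have "(SIGMA j:{..<F}. stars j) = prod.swap ` (SIGMA k:{..<K}. {j. j < F \<and> P j k = None})"
    by (auto simp: stars_def)
  also have "card \<dots> = (\<Sum>k<K. card {j. j < F \<and> P j k = None})"
    by (simp add: card_image)
  also have "\<dots> = K * Z" by (simp add: card_column_stars)
  finally show ?thesis .
qed

end

locale tight_regular_pda = regular_pda +
  fixes t :: nat
  assumes g_eq: "g = int t + 1"
    and tight: "t * F = K * Z"
begin

lemma card_stars: "j < F \<Longrightarrow> card (stars j) = t"
  using sum_mono_inv[of "\<lambda>_. t" "{..<F}" "\<lambda>j. card (stars j)"]
    sum_card_stars tight card_stars_lower_bound g_eq by (simp add: mult.commute)

lemma stars_eq_occurrence_columns:
  assumes "(j, k) \<in> occurrences s"
  shows "stars j = snd ` occurrences s - {k}"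
proof -
  have "j < F" using assms by (simp add: occurrences_def)
  then have "card (snd ` occurrences s - {k}) = card (stars j)"
    using card_occurrence_columns_remove[OF assms] card_stars g_eq by simp
  then show ?thesis
    using card_subset_eq[OF finite_stars occurrence_columns_subset_stars[OF assms]] by simp
qed

lemma stars_exchange:
  assumes "j < F" and "k \<in> {..<K} - stars j" and "k' \<in> stars j"
  shows "\<exists>j'\<in>{..<F}. stars j' = insert k (stars j - {k'})"
proof -
  obtain s where jk: "(j, k) \<in> occurrences s"
    using assms by (auto simp: stars_def occurrences_def)
  then have "k' \<in> snd ` occurrences s" using stars_eq_occurrence_columns assms(3) by blast
  then obtain j' where j'k': "(j', k') \<in> occurrences s" by force
  have "stars j' = snd ` occurrences s - {k'}" using stars_eq_occurrence_columns[OF j'k'] .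
  moreover have "stars j = snd ` occurrences s - {k}" using stars_eq_occurrence_columns[OF jk] .
  moreover have "k \<in> snd ` occurrences s" using jk by force
  ultimately have "stars j' = insert k (stars j - {k'})" using assms(2,3) by auto
  then show ?thesis using j'k' by (auto simp: occurrences_def)
qed

lemma K_choose_t_le_F: "K choose t \<le> F"
  using card_ge_choose_of_exchange_closed_family[of "{..<K}" "{..<F}" stars t]
    F_pos stars_subset card_stars stars_exchange by auto

end

theorem theorem3:
  fixes K F Z S :: nat and g :: int and P :: "nat \<Rightarrow> nat \<Rightarrow> nat option"
  assumes "g_regular_PDA K F Z S g P"
    and "real_of_int g = real K * real Z / real F + 1"
    and "g \<ge> 2"
  shows "F \<ge> K choose (K * Z div F)"
proof -
  interpret regular_pda K F Z S g P by unfold_locales (fact assms(1))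
  define t where "t = nat (g - 1)"
  have g_eq: "g = int t + 1" using assms(3) by (simp add: t_def)
  then have "real t * real F = real K * real Z" using assms(2) F_pos by (simp add: field_simps)
  then have tight: "t * F = K * Z" by (metis of_nat_eq_iff of_nat_mult)
  interpret tight_regular_pda K F Z S g P t by unfold_locales (fact g_eq, fact tight)
  have "K * Z div F = t" using tight F_pos by (metis nonzero_mult_div_cancel_right less_not_refl2)
  then show ?thesis using K_choose_t_le_F by simp
qed

end
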